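(* Let $f=\frac1n\sum_{i=1}^n f_i$ where each $f_i:\mathbb{R}^d\to\mathbb{R}$ is $L$-smooth, and assume moreover that either each $f_i$ is $\mu$-strongly convex for some $\mu>0$, or $\inf_x f(x)>-\infty$. Let the stepsize satisfy $\gamma\le\frac1{2Ln}$. Then the iterates of No Full Grad SVRG (described in the context) satisfy, for every epoch $s\ge1$, $$\Big\|\nabla f(\omega_s)-\frac1n\sum_{t=0}^{n-1}v_s^t\Big\|^2\le 8\gamma^2L^2n^2\|v_s\|^2+32\gamma^2L^2n^2\|v_{s-1}\|^2.$$
   Context: No Full Grad SVRG: input $x_0^0\in\mathbb{R}^d$, $\omega_0=x_0^0$, $\tilde v_0^0=0$, $v_0=0$, stepsize $\gamma>0$. For epochs $s=0,1,\dots$: choose a permutation $\pi_s^0,\dots,\pi_s^{n-1}$ of the $n$ component indices (by any shuffling rule); for $t=0,\dots,n-1$ set $\tilde v_s^{t+1}=\frac{t}{t+1}\tilde v_s^t+\frac1{t+1}\nabla f_{\pi_s^t}(x_s^t)$, $v_s^t=\nabla f_{\pi_s^t}(x_s^t)-\nabla f_{\pi_s^t}(\omega_s)+v_s$, $x_s^{t+1}=x_s^t-\gamma v_s^t$; then $x_{s+1}^0=x_s^n$, $\omega_{s+1}=x_s^n$, $\tilde v_{s+1}^0=0$, $v_{s+1}=\tilde v_s^n$. *)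

theory Defs
  imports "HOL-Analysis.Analysis"
begin

definition grad :: "('a::euclidean_space \<Rightarrow> real) \<Rightarrow> 'a \<Rightarrow> 'a" where
  "grad f x = (THE D. GDERIV f x :> D)"

definition L_smooth :: "real \<Rightarrow> ('a::euclidean_space \<Rightarrow> real) \<Rightarrow> bool" where
  "L_smooth L f \<longleftrightarrow> (\<forall>x. \<exists>D. GDERIV f x :> D) \<and>
     (\<forall>x y. norm (grad f x - grad f y) \<le> L * norm (x - y))"

definition strongly_convex :: "real \<Rightarrow> ('a::euclidean_space \<Rightarrow> real) \<Rightarrow> bool" where
  "strongly_convex \<mu> f \<longleftrightarrow> convex_on UNIV (\<lambda>x. f x - \<mu> / 2 * (norm x)\<^sup>2)"

text \<open>The iterates of No Full Grad SVRG, with components indexed 0..n-1.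
  x s t = x_s^t, w s = omega_s, vt s t = tilde v_s^t, V s = v_s, vst s t = v_s^t,
  \<pi> s = the permutation used in epoch s.\<close>
definition nfg_svrg ::
  "nat \<Rightarrow> (nat \<Rightarrow> 'a::euclidean_space \<Rightarrow> real) \<Rightarrow> real \<Rightarrow> (nat \<Rightarrow> nat \<Rightarrow> nat)
   \<Rightarrow> (nat \<Rightarrow> nat \<Rightarrow> 'a) \<Rightarrow> (nat \<Rightarrow> 'a) \<Rightarrow> (nat \<Rightarrow> nat \<Rightarrow> 'a) \<Rightarrow> (nat \<Rightarrow> 'a)
   \<Rightarrow> (nat \<Rightarrow> nat \<Rightarrow> 'a) \<Rightarrow> bool" where
  "nfg_svrg n f \<gamma> \<pi> x w vt V vst \<longleftrightarrow>
     w 0 = x 0 0 \<and> V 0 = 0 \<and>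
     (\<forall>s. \<pi> s permutes {..<n}) \<and>
     (\<forall>s. vt s 0 = 0) \<and>
     (\<forall>s. \<forall>t<n. vt s (Suc t) =
          (real t / real (t + 1)) *\<^sub>R vt s t + (1 / real (t + 1)) *\<^sub>R grad (f (\<pi> s t)) (x s t)) \<and>
     (\<forall>s. \<forall>t<n. vst s t = grad (f (\<pi> s t)) (x s t) - grad (f (\<pi> s t)) (w s) + V s) \<and>
     (\<forall>s. \<forall>t<n. x s (Suc t) = x s t - \<gamma> *\<^sub>R vst s t) \<and>
     (\<forall>s. x (Suc s) 0 = x s n \<and> w (Suc s) = x s n \<and> V (Suc s) = vt s n)"

end

theory Submission imports Defs "HOL-Combinatorics.Permutations" begin

text \<open>Within an epoch every direction satisfies
  \<open>\<parallel>v\<^sub>s\<^sup>t\<parallel> \<le> L \<parallel>x\<^sub>s\<^sup>t - \<omega>\<^sub>s\<parallel> + \<parallel>v\<^sub>s\<parallel>\<close>, so as long as \<open>2 L \<gamma> n \<le> 1\<close> the iterates drift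
  from the anchor \<open>\<omega>\<^sub>s\<close> by at most \<open>2 \<gamma> n \<parallel>v\<^sub>s\<parallel>\<close>. Since \<open>\<tilde>v\<close> is a running average,
  \<open>v\<^sub>s\<close> is the average of the gradients met during epoch \<open>s - 1\<close>, evaluated along that
  epoch's iterates, while \<open>\<nabla>f(\<omega>\<^sub>s)\<close> averages the same gradients at the endpoint
  \<open>\<omega>\<^sub>s = x\<^sub>s\<^sub>-\<^sub>1\<^sup>n\<close>. The error therefore splits into two averages of gradient differences,
  bounded via Lipschitz continuity by \<open>2 L \<gamma> n \<parallel>v\<^sub>s\<parallel>\<close> and \<open>4 L \<gamma> n \<parallel>v\<^sub>s\<^sub>-\<^sub>1\<parallel>\<close>,
  and \<open>\<parallel>a + b\<parallel>\<^sup>2 \<le> 2\<parallel>a\<parallel>\<^sup>2 + 2\<parallel>b\<parallel>\<^sup>2\<close> concludes.\<close>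

lemma grad_eqI:
  assumes "GDERIV f x :> D"
  shows "grad f x = D"
  unfolding grad_def
proof (rule the_equality)
  show "GDERIV f x :> D" by fact
next
  fix D' assume "GDERIV f x :> D'"
  hence "(\<lambda>h. inner h D') = (\<lambda>h. inner h D)"
    using assms unfolding gderiv_def by (rule has_derivative_unique)
  hence "inner (D' - D) D' = inner (D' - D) D" by metis
  hence "inner (D' - D) (D' - D) = 0" by (simp add: inner_diff_right)
  thus "D' = D" by simp
qed

lemma GDERIV_sum:
  assumes "\<And>i. i \<in> A \<Longrightarrow> GDERIV (f i) x :> D i"
  shows "GDERIV (\<lambda>z. \<Sum>i\<in>A. f i z) x :> (\<Sum>i\<in>A. D i)"
proof -
  have "((\<lambda>z. \<Sum>i\<in>A. f i z) has_derivative (\<lambda>h. \<Sum>i\<in>A. inner h (D i))) (at x)"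
    using assms unfolding gderiv_def by (intro has_derivative_sum) auto
  thus ?thesis unfolding gderiv_def by (simp add: inner_sum_right)
qed

lemma grad_average:
  assumes "\<And>i. i < n \<Longrightarrow> \<exists>D. GDERIV (f i) y :> D"
  shows "grad (\<lambda>z. (1 / real n) * (\<Sum>i<n. f i z)) y = (1 / real n) *\<^sub>R (\<Sum>i<n. grad (f i) y)"
proof -
  have "GDERIV (f i) y :> grad (f i) y" if "i < n" for i
  proof -
    obtain D where "GDERIV (f i) y :> D" using assms \<open>i < n\<close> by blast
    thus ?thesis using grad_eqI by metis
  qed
  hence "GDERIV (\<lambda>z. \<Sum>i<n. f i z) y :> (\<Sum>i<n. grad (f i) y)"
    by (intro GDERIV_sum) auto
  hence "GDERIV (\<lambda>z. (1 / real n) * (\<Sum>i<n. f i z)) y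
           :> (1 / real n) *\<^sub>R (\<Sum>i<n. grad (f i) y) + (\<Sum>i<n. f i y) *\<^sub>R 0"
    by (intro GDERIV_mult GDERIV_const)
  thus ?thesis by (intro grad_eqI) simp
qed

lemma running_average_sum:
  fixes m a :: "nat \<Rightarrow> 'a::real_vector"
  assumes "m 0 = 0"
    and "\<And>t. t < n \<Longrightarrow> m (Suc t) = (real t / real (t + 1)) *\<^sub>R m t + (1 / real (t + 1)) *\<^sub>R a t"
    and "t \<le> n"
  shows "real t *\<^sub>R m t = (\<Sum>k<t. a k)"
  using \<open>t \<le> n\<close>
proof (induction t)
  case (Suc t)
  hence t: "t < n" by simp
  have "real (Suc t) *\<^sub>R m (Suc t)
      = (real (Suc t) * (real t / real (t + 1))) *\<^sub>R m t + (real (Suc t) * (1 / real (t + 1))) *\<^sub>R a t"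
    unfolding assms(2)[OF t] by (simp only: scaleR_right_distrib scaleR_scaleR)
  also have "\<dots> = real t *\<^sub>R m t + a t"
    by simp
  finally show ?case using Suc by simp
qed (simp add: assms(1))

lemma norm_average_le:
  fixes u :: "nat \<Rightarrow> 'a::real_normed_vector"
  assumes "n > 0" and "\<And>t. t < n \<Longrightarrow> norm (u t) \<le> B"
  shows "norm ((1 / real n) *\<^sub>R (\<Sum>t<n. u t)) \<le> B"
proof -
  have "norm ((1 / real n) *\<^sub>R (\<Sum>t<n. u t)) \<le> (1 / real n) * (\<Sum>t<n. norm (u t))"
    by (simp add: norm_sum divide_right_mono)
  also have "\<dots> \<le> (1 / real n) * (\<Sum>t<n. B)"
    using assms(2) by (intro mult_left_mono sum_mono) auto
  also have "\<dots> = B" using assms(1) by simp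
  finally show ?thesis .
qed

lemma power2_norm_add_le:
  fixes a b :: "'a::real_normed_vector"
  shows "(norm (a + b))\<^sup>2 \<le> 2 * (norm a)\<^sup>2 + 2 * (norm b)\<^sup>2"
proof -
  have "(norm (a + b))\<^sup>2 \<le> (norm a + norm b)\<^sup>2"
    by (intro power_mono norm_triangle_ineq) auto
  also have "\<dots> \<le> 2 * (norm a)\<^sup>2 + 2 * (norm b)\<^sup>2"
    using sum_squares_bound[of "norm a" "norm b"] by (simp add: power2_sum)
  finally show ?thesis .
qed

locale nfg_svrg_smooth =
  fixes n :: nat and f :: "nat \<Rightarrow> 'a::euclidean_space \<Rightarrow> real" and L \<gamma> :: real
    and \<pi> :: "nat \<Rightarrow> nat \<Rightarrow> nat"
    and x vt vst :: "nat \<Rightarrow> nat \<Rightarrow> 'a" and w V :: "nat \<Rightarrow> 'a"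
  assumes alg: "nfg_svrg n f \<gamma> \<pi> x w vt V vst"
    and smooth: "\<forall>i<n. L_smooth L (f i)"
    and n_pos: "n > 0" and L_nonneg: "L \<ge> 0" and \<gamma>_nonneg: "\<gamma> \<ge> 0"
    and step_small: "2 * L * \<gamma> * real n \<le> 1"
begin

lemma
  shows perm: "\<pi> q permutes {..<n}"
    and vt_0: "vt q 0 = 0"
    and vt_Suc: "t < n \<Longrightarrow> vt q (Suc t) =
          (real t / real (t + 1)) *\<^sub>R vt q t + (1 / real (t + 1)) *\<^sub>R grad (f (\<pi> q t)) (x q t)"
    and vst_eq: "t < n \<Longrightarrow> vst q t = grad (f (\<pi> q t)) (x q t) - grad (f (\<pi> q t)) (w q) + V q"
    and x_Suc: "t < n \<Longrightarrow> x q (Suc t) = x q t - \<gamma> *\<^sub>R vst q t"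
    and w_Suc: "w (Suc q) = x q n"
    and V_Suc: "V (Suc q) = vt q n"
  using alg unfolding nfg_svrg_def by auto

lemma w_eq_x0: "w q = x q 0"
  using alg by (cases q) (auto simp: nfg_svrg_def)

lemma perm_less: "t < n \<Longrightarrow> \<pi> q t < n"
  using permutes_in_image[OF perm] by auto

lemma sum_grad_perm: "(\<Sum>t<n. grad (f (\<pi> q t)) y) = (\<Sum>i<n. grad (f i) y)"
  using comm_monoid_add_class.sum.permute[OF perm, of "\<lambda>i. grad (f i) y"] by simp

lemma has_gderiv: "i < n \<Longrightarrow> \<exists>D. GDERIV (f i) y :> D"
  using smooth unfolding L_smooth_def by blast

lemma grad_lipschitz: "i < n \<Longrightarrow> norm (grad (f i) y - grad (f i) z) \<le> L * norm (y - z)"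
  using smooth unfolding L_smooth_def by blast

lemma drift_le: "t \<le> n \<Longrightarrow> norm (x q t - w q) \<le> 2 * \<gamma> * real t * norm (V q)"
proof (induction t)
  case 0 thus ?case by (simp add: w_eq_x0)
next
  case (Suc t)
  hence t: "t < n" and IH: "norm (x q t - w q) \<le> 2 * \<gamma> * real t * norm (V q)" by auto
  have "2 * L * \<gamma> * real t \<le> 2 * L * \<gamma> * real n"
    using t L_nonneg \<gamma>_nonneg by (intro mult_left_mono) auto
  hence "2 * L * \<gamma> * real t \<le> 1"
    using step_small by linarith
  hence "L * (2 * \<gamma> * real t * norm (V q)) \<le> norm (V q)"
    using mult_right_mono[of "2 * L * \<gamma> * real t" 1 "norm (V q)"] by (simp add: algebra_simps)
  moreover have "norm (vst q t)
      \<le> norm (grad (f (\<pi> q t)) (x q t) - grad (f (\<pi> q t)) (w q)) + norm (V q)"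
    unfolding vst_eq[OF t] by (rule norm_triangle_ineq)
  moreover have "norm (grad (f (\<pi> q t)) (x q t) - grad (f (\<pi> q t)) (w q)) \<le> L * norm (x q t - w q)"
    using grad_lipschitz[OF perm_less[OF t]] .
  moreover have "L * norm (x q t - w q) \<le> L * (2 * \<gamma> * real t * norm (V q))"
    using IH L_nonneg by (rule mult_left_mono)
  ultimately have v: "norm (vst q t) \<le> 2 * norm (V q)" by linarith
  have "norm (x q (Suc t) - w q) = norm ((x q t - w q) - \<gamma> *\<^sub>R vst q t)"
    using x_Suc[OF t, of q] by (simp add: diff_diff_eq add.commute)
  also have "\<dots> \<le> norm (x q t - w q) + \<gamma> * norm (vst q t)"
    using norm_triangle_ineq4[of "x q t - w q" "\<gamma> *\<^sub>R vst q t"] \<gamma>_nonneg by simp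
  also have "\<dots> \<le> 2 * \<gamma> * real t * norm (V q) + \<gamma> * (2 * norm (V q))"
    using IH v \<gamma>_nonneg by (intro add_mono mult_left_mono) auto
  finally show ?case by (simp add: algebra_simps)
qed

lemma drift_le_epoch: "t \<le> n \<Longrightarrow> norm (x q t - w q) \<le> 2 * \<gamma> * real n * norm (V q)"
  using drift_le[of t q] mult_right_mono[of "2 * \<gamma> * real t" "2 * \<gamma> * real n" "norm (V q)"]
    \<gamma>_nonneg by (simp add: mult_left_mono)

lemma V_Suc_average: "V (Suc q) = (1 / real n) *\<^sub>R (\<Sum>t<n. grad (f (\<pi> q t)) (x q t))"
proof -
  have "V (Suc q) = (1 / real n) *\<^sub>R (real n *\<^sub>R vt q n)"
    using n_pos by (simp add: V_Suc)
  thus ?thesis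
    using running_average_sum[of "vt q" n, OF vt_0 vt_Suc] by simp
qed

text \<open>Reindexing by the two permutations \<open>\<pi> q\<close> and \<open>\<pi> (Suc q)\<close> is what lets the
  gradient sums at \<open>\<omega>\<^sub>q\<^sub>+\<^sub>1\<close> of the two consecutive epochs cancel.\<close>
lemma gradient_error_split:
  "grad (\<lambda>z. (1 / real n) * (\<Sum>i<n. f i z)) (w (Suc q))
     - (1 / real n) *\<^sub>R (\<Sum>t<n. vst (Suc q) t)
   = (1 / real n) *\<^sub>R (\<Sum>t<n. grad (f (\<pi> (Suc q) t)) (w (Suc q)) - grad (f (\<pi> (Suc q) t)) (x (Suc q) t))
     + (1 / real n) *\<^sub>R (\<Sum>t<n. grad (f (\<pi> q t)) (x q n) - grad (f (\<pi> q t)) (x q t))"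
proof -
  have "grad (\<lambda>z. (1 / real n) * (\<Sum>i<n. f i z)) (w (Suc q))
          = (1 / real n) *\<^sub>R (\<Sum>t<n. grad (f (\<pi> (Suc q) t)) (w (Suc q)))"
    by (simp only: grad_average[OF has_gderiv] sum_grad_perm)
  moreover have "(\<Sum>t<n. vst (Suc q) t) = (\<Sum>t<n. grad (f (\<pi> (Suc q) t)) (x (Suc q) t))
          - (\<Sum>t<n. grad (f (\<pi> (Suc q) t)) (w (Suc q))) + real n *\<^sub>R V (Suc q)"
    using vst_eq by (simp add: sum.distrib sum_subtractf sum_constant_scaleR)
  hence "(1 / real n) *\<^sub>R (\<Sum>t<n. vst (Suc q) t)
          = (1 / real n) *\<^sub>R (\<Sum>t<n. grad (f (\<pi> (Suc q) t)) (x (Suc q) t))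
            - (1 / real n) *\<^sub>R (\<Sum>t<n. grad (f (\<pi> (Suc q) t)) (w (Suc q))) + V (Suc q)"
    using n_pos by (simp add: scaleR_diff_right scaleR_add_right)
  moreover have "(\<Sum>t<n. grad (f (\<pi> (Suc q) t)) (w (Suc q))) = (\<Sum>t<n. grad (f (\<pi> q t)) (x q n))"
    by (simp add: sum_grad_perm w_Suc)
  ultimately show ?thesis
    using n_pos
    by (simp only: V_Suc_average sum_subtractf scaleR_diff_right) simp
qed

lemma norm_error_at_anchor:
  "norm ((1 / real n) *\<^sub>R (\<Sum>t<n. grad (f (\<pi> q t)) (w q) - grad (f (\<pi> q t)) (x q t)))
     \<le> 2 * L * \<gamma> * real n * norm (V q)"
proof (rule norm_average_le[OF n_pos])
  fix t assume t: "t < n"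
  have "norm (grad (f (\<pi> q t)) (w q) - grad (f (\<pi> q t)) (x q t)) \<le> L * norm (x q t - w q)"
    using grad_lipschitz[OF perm_less[OF t]] by (simp add: norm_minus_commute)
  also have "\<dots> \<le> L * (2 * \<gamma> * real n * norm (V q))"
    using drift_le_epoch t L_nonneg by (intro mult_left_mono) auto
  finally show "norm (grad (f (\<pi> q t)) (w q) - grad (f (\<pi> q t)) (x q t)) \<le> 2 * L * \<gamma> * real n * norm (V q)"
    by (simp add: algebra_simps)
qed

lemma norm_error_at_end:
  "norm ((1 / real n) *\<^sub>R (\<Sum>t<n. grad (f (\<pi> q t)) (x q n) - grad (f (\<pi> q t)) (x q t)))
     \<le> 4 * L * \<gamma> * real n * norm (V q)"
proof (rule norm_average_le[OF n_pos])
  fix t assume t: "t < n"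
  have "norm (x q n - x q t) \<le> norm (x q n - w q) + norm (x q t - w q)"
    using norm_triangle_ineq4[of "x q n - w q" "x q t - w q"] by simp
  also have "\<dots> \<le> 4 * \<gamma> * real n * norm (V q)"
    using drift_le_epoch[of n q] drift_le_epoch[of t q] t by simp
  finally have "L * norm (x q n - x q t) \<le> L * (4 * \<gamma> * real n * norm (V q))"
    using L_nonneg by (rule mult_left_mono)
  thus "norm (grad (f (\<pi> q t)) (x q n) - grad (f (\<pi> q t)) (x q t)) \<le> 4 * L * \<gamma> * real n * norm (V q)"
    by (auto intro: order_trans[OF grad_lipschitz[OF perm_less[OF t]]] simp: algebra_simps)
qed

end

theorem lemma2:
  fixes n :: nat and f :: "nat \<Rightarrow> 'a::euclidean_space \<Rightarrow> real" and L \<gamma> :: real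
    and \<pi> :: "nat \<Rightarrow> nat \<Rightarrow> nat"
    and x vt vst :: "nat \<Rightarrow> nat \<Rightarrow> 'a" and w V :: "nat \<Rightarrow> 'a"
  assumes n: "n \<ge> 1"
    and L: "L > 0"
    and smooth: "\<forall>i<n. L_smooth L (f i)"
    and conv_or_bdd: "(\<exists>\<mu>>0. \<forall>i<n. strongly_convex \<mu> (f i))
                      \<or> bdd_below (range (\<lambda>z. (1 / real n) * (\<Sum>i<n. f i z)))"
    and \<gamma>: "\<gamma> > 0" "\<gamma> \<le> 1 / (2 * L * real n)"
    and alg: "nfg_svrg n f \<gamma> \<pi> x w vt V vst"
    and s: "s \<ge> 1"
  shows "(norm (grad (\<lambda>z. (1 / real n) * (\<Sum>i<n. f i z)) (w s)
                 - (1 / real n) *\<^sub>R (\<Sum>t<n. vst s t)))\<^sup>2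
         \<le> 8 * \<gamma>\<^sup>2 * L\<^sup>2 * (real n)\<^sup>2 * (norm (V s))\<^sup>2
           + 32 * \<gamma>\<^sup>2 * L\<^sup>2 * (real n)\<^sup>2 * (norm (V (s - 1)))\<^sup>2"
proof -
  have "2 * L * \<gamma> * real n \<le> 1"
    using \<gamma> L n by (simp add: field_simps)
  then interpret nfg_svrg_smooth n f L \<gamma> \<pi> x vt vst w V
    using alg smooth n L \<gamma> by unfold_locales auto
  obtain p where p: "s = Suc p" using s by (cases s) auto
  let ?a = "(1 / real n) *\<^sub>R (\<Sum>t<n. grad (f (\<pi> s t)) (w s) - grad (f (\<pi> s t)) (x s t))"
  let ?b = "(1 / real n) *\<^sub>R (\<Sum>t<n. grad (f (\<pi> p t)) (x p n) - grad (f (\<pi> p t)) (x p t))"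
  have "(norm ?a)\<^sup>2 \<le> (2 * L * \<gamma> * real n * norm (V s))\<^sup>2"
    using norm_error_at_anchor[of s] by (intro power_mono) auto
  moreover have "(norm ?b)\<^sup>2 \<le> (4 * L * \<gamma> * real n * norm (V p))\<^sup>2"
    using norm_error_at_end[of p] by (intro power_mono) auto
  moreover have "2 * (2 * L * \<gamma> * real n * norm (V s))\<^sup>2 + 2 * (4 * L * \<gamma> * real n * norm (V p))\<^sup>2
      = 8 * \<gamma>\<^sup>2 * L\<^sup>2 * (real n)\<^sup>2 * (norm (V s))\<^sup>2 + 32 * \<gamma>\<^sup>2 * L\<^sup>2 * (real n)\<^sup>2 * (norm (V p))\<^sup>2"
    by (simp add: power_mult_distrib)
  ultimately have "(norm (?a + ?b))\<^sup>2
      \<le> 8 * \<gamma>\<^sup>2 * L\<^sup>2 * (real n)\<^sup>2 * (norm (V s))\<^sup>2 + 32 * \<gamma>\<^sup>2 * L\<^sup>2 * (real n)\<^sup>2 * (norm (V p))\<^sup>2"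
    using power2_norm_add_le[of ?a ?b] by linarith
  thus ?thesis
    using gradient_error_split[of p] p by simp
qed

end
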